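(* Let $n>3$ be a real number. The fourth-order algebraic differential equation $$y''''\,(y')^2-3\,y'''\,y''\,y'+2\left(1-n^{-2}\right)(y'')^3=0 \qquad \text{(B)}$$ is universal: for every continuous function $\phi:\mathbb R\to\mathbb R$ and every positive continuous function $\epsilon:\mathbb R\to(0,\infty)$ there exists a function $y:\mathbb R\to\mathbb R$ of class $C^4$ which satisfies (B) at every point of $\mathbb R$ and such that $$|y(t)-\phi(t)|<\epsilon(t)\qquad\text{for all } t\in\mathbb R.$$
   Context: A polynomial ordinary differential equation $P(y,y',\dots,y^{(k)})=0$ is called universal if for every continuous $\phi:\mathbb R\to\mathbb R$ and every positive continuous $\epsilon:\mathbb R\to(0,\infty)$ it has a solution $y$, defined and sufficiently differentiable on all of $\mathbb R$ (here: $C^4$, so that the equation holds pointwise), with $|y(t)-\phi(t)|<\epsilon(t)$ for all real $t$. *)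

theory Defs
  imports "HOL-Analysis.Analysis"
begin

definition C_k_on_R :: "nat \<Rightarrow> (real \<Rightarrow> real) \<Rightarrow> bool" where
  "C_k_on_R k y \<longleftrightarrow>
     (\<forall>j<k. \<forall>t. ((deriv ^^ j) y) differentiable (at t)) \<and>
     continuous_on UNIV ((deriv ^^ k) y)"

end

theory Submission
  imports Defs
begin

(* The left-hand side of (B) gets multiplied by B^3 C^6 when y is replaced by A + B y(C x + E),
   so affine copies of solutions are solutions. A C^4 solution S that is 0 on (-inf, 1/4] and
   1 on [3/4, inf) is the normalised primitive of u = g^n, restricted to an interval (a, b) on
   which g > 0 and extended by 0, where g'' = -2 g^3 (a lemniscatic sine): with c = 1 - 1/n^2 the
   function u solves u''' u^2 - 3 u'' u' u + 2 c u'^3 = 0, which is (B) for y' = u, and n > 3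
   makes u of class C^3.
   Given phi and epsilon, cut each [k, k + 1] into cells on which phi varies by less than epsilon,
   and on each cell let y run from the value of phi at its left end to the value at its right end
   along an affine copy of S. As S is flat near 0 and 1, y is near every point an affine copy of S,
   and y - phi is a convex combination of two variations of phi within one cell. *)

section \<open>Chains of successive derivatives\<close>

definition derivative_chain_on :: "real set \<Rightarrow> nat \<Rightarrow> (nat \<Rightarrow> real \<Rightarrow> real) \<Rightarrow> bool" where
  "derivative_chain_on S m f \<longleftrightarrow>
     (\<forall>k<m. \<forall>t\<in>S. (f k has_real_derivative f (Suc k) t) (at t)) \<and> continuous_on S (f m)"

lemma funpow_deriv_eq_on_open:
  assumes "open Q" "\<And>x. x \<in> Q \<Longrightarrow> f x = g x" "x \<in> Q"
  shows "(deriv ^^ k) f x = (deriv ^^ k) g x"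
  using assms(3)
proof (induction k arbitrary: x)
  case (Suc k)
  have "eventually (\<lambda>z. z \<in> Q) (nhds x)"
    using assms(1) Suc.prems by (rule eventually_nhds_in_open)
  then have "eventually (\<lambda>z. (deriv ^^ k) f z = (deriv ^^ k) g z) (nhds x)"
    by (rule eventually_mono) (rule Suc.IH)
  then show ?case by (simp add: deriv_cong_ev)
qed (simp add: assms(2))

lemma C_k_on_R_local:
  assumes "\<And>t. \<exists>Q h. open Q \<and> t \<in> Q \<and> C_k_on_R k h \<and> (\<forall>x\<in>Q. y x = h x)"
  shows "C_k_on_R k y"
proof -
  have near: "\<exists>h. C_k_on_R k h \<and> eventually (\<lambda>x. (deriv ^^ j) y x = (deriv ^^ j) h x) (nhds t)"
    for j t
  proof -
    obtain Q h where Q: "open Q" "t \<in> Q" "C_k_on_R k h" "\<forall>x\<in>Q. y x = h x"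
      using assms by blast
    have "eventually (\<lambda>x. x \<in> Q) (nhds t)" using Q by (intro eventually_nhds_in_open)
    then show ?thesis
      using Q by (auto elim!: eventually_mono intro!: exI[of _ h] funpow_deriv_eq_on_open)
  qed
  have "((deriv ^^ j) y) differentiable (at t)" if "j < k" for j t
  proof -
    obtain h where h: "C_k_on_R k h"
      and ev: "eventually (\<lambda>x. (deriv ^^ j) y x = (deriv ^^ j) h x) (nhds t)"
      using near by blast
    obtain D where "((deriv ^^ j) h has_real_derivative D) (at t)"
      using h \<open>j < k\<close> by (auto simp: C_k_on_R_def real_differentiable_def)
    then have "((deriv ^^ j) y has_real_derivative D) (at t)"
      using ev by (subst DERIV_cong_ev[OF refl _ refl]) auto
    then show ?thesis by (auto simp: real_differentiable_def)
  qed
  moreover have "isCont ((deriv ^^ k) y) t" for t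
  proof -
    obtain h where h: "C_k_on_R k h"
      and ev: "eventually (\<lambda>x. (deriv ^^ k) y x = (deriv ^^ k) h x) (nhds t)"
      using near by blast
    then show ?thesis
      by (subst isCont_cong[OF ev]) (simp add: C_k_on_R_def continuous_on_eq_continuous_at)
  qed
  ultimately show ?thesis
    by (simp add: C_k_on_R_def continuous_on_eq_continuous_at)
qed

lemma derivative_chain_funpow_deriv:
  assumes "derivative_chain_on UNIV m f" "k \<le> m"
  shows "(deriv ^^ k) (f 0) = f k"
  using assms(2)
proof (induction k)
  case (Suc k)
  have "deriv (f k) t = f (Suc k) t" for t
    using assms(1) Suc.prems by (intro DERIV_imp_deriv) (simp add: derivative_chain_on_def)
  then show ?case using Suc by auto
qed simp

lemma C_k_on_R_derivative_chain:
  assumes "derivative_chain_on UNIV m f"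
  shows "C_k_on_R m (f 0)"
  using assms derivative_chain_funpow_deriv[OF assms]
  by (auto simp: C_k_on_R_def derivative_chain_on_def real_differentiable_def)

lemma derivative_chain_affine:
  assumes "derivative_chain_on UNIV m f"
  shows "derivative_chain_on UNIV m (\<lambda>k x. (if k = 0 then A else 0) + B * C ^ k * f k (C * x + E))"
  unfolding derivative_chain_on_def
proof (intro conjI allI impI ballI)
  fix k t assume "k < m"
  then have "(f k has_real_derivative f (Suc k) (C * t + E)) (at (C * t + E))"
    using assms by (simp add: derivative_chain_on_def)
  moreover have "((\<lambda>x. C * x + E) has_real_derivative C) (at t)"
    by (auto intro!: derivative_eq_intros)
  ultimately have "((\<lambda>x. f k (C * x + E)) has_real_derivative f (Suc k) (C * t + E) * C) (at t)"
    by (rule DERIV_chain2)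
  then show "((\<lambda>x. (if k = 0 then A else 0) + B * C ^ k * f k (C * x + E)) has_real_derivative
      (if Suc k = 0 then A else 0) + B * C ^ Suc k * f (Suc k) (C * t + E)) (at t)"
    by (auto intro!: derivative_eq_intros)
next
  have "continuous_on UNIV (f m)" using assms by (simp add: derivative_chain_on_def)
  then have "continuous_on UNIV (\<lambda>x. f m (C * x + E))"
    by (rule continuous_on_compose2[of UNIV]) (auto intro!: continuous_intros)
  then show "continuous_on UNIV (\<lambda>x. (if m = 0 then A else 0) + B * C ^ m * f m (C * x + E))"
    by (intro continuous_intros)
qed

lemma derivative_chain_primitive:
  assumes "derivative_chain_on S m f" "\<And>t. t \<in> S \<Longrightarrow> (F has_real_derivative f 0 t) (at t)"
  shows "derivative_chain_on S (Suc m) (case_nat F f)"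
  using assms by (auto simp: derivative_chain_on_def less_Suc_eq_0_disj)

lemma derivative_chain_extend_by_zero:
  assumes chain: "derivative_chain_on W m f" and "open W" "closed K" "K \<subseteq> W"
    and vanish: "\<And>k t. k \<le> m \<Longrightarrow> t \<in> W - K \<Longrightarrow> f k t = 0"
  shows "derivative_chain_on UNIV m (\<lambda>k t. if t \<in> W then f k t else 0)"
proof -
  define f0 where "f0 k t = (if t \<in> W then f k t else 0)" for k t
  have agree: "eventually (\<lambda>x. f0 k x = (if t \<in> W then f k x else 0)) (nhds t)"
    if "k \<le> m" for k t
  proof (cases "t \<in> W")
    case True
    have "eventually (\<lambda>x. x \<in> W) (nhds t)"
      using \<open>open W\<close> True by (rule eventually_nhds_in_open)
    then show ?thesis
      using True by (auto simp: f0_def elim!: eventually_mono)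
  next
    case False
    then have "eventually (\<lambda>x. x \<in> - K) (nhds t)"
      using \<open>closed K\<close> \<open>K \<subseteq> W\<close> by (intro eventually_nhds_in_open) auto
    then show ?thesis
      using False vanish[OF that] by (auto simp: f0_def elim!: eventually_mono)
  qed
  have "(f0 k has_real_derivative f0 (Suc k) t) (at t)" if "k < m" for k t
  proof (cases "t \<in> W")
    case True
    then have "(f k has_real_derivative f (Suc k) t) (at t)"
      using chain that by (simp add: derivative_chain_on_def)
    then show ?thesis
      using agree[of k t] that True by (subst DERIV_cong_ev[OF refl _ refl]) (auto simp: f0_def)
  next
    case False
    then show ?thesis
      using agree[of k t] agree[of "Suc k" t] that
      by (subst DERIV_cong_ev[OF refl _ refl]) (auto simp: f0_def eventually_nhds_x_imp_x)
  qed
  moreover have "isCont (f0 m) t" for t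
  proof (cases "t \<in> W")
    case True
    have "isCont (f m) t"
      using chain \<open>open W\<close> True by (simp add: derivative_chain_on_def continuous_on_eq_continuous_at)
    then show ?thesis using agree[of m t] True by (subst isCont_cong) auto
  next
    case False
    then show ?thesis using agree[of m t] by (subst isCont_cong) auto
  qed
  ultimately have "derivative_chain_on UNIV m f0"
    by (simp add: derivative_chain_on_def continuous_on_eq_continuous_at)
  then show ?thesis
    unfolding f0_def[abs_def] .
qed

section \<open>Affine copies of solutions\<close>

definition ode_poly :: "real \<Rightarrow> real \<Rightarrow> real \<Rightarrow> real \<Rightarrow> real \<Rightarrow> real" where
  "ode_poly c y1 y2 y3 y4 = y4 * y1\<^sup>2 - 3 * y3 * y2 * y1 + 2 * c * y2 ^ 3"

lemma ode_poly_scale: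
  "ode_poly c (B * C * y1) (B * C ^ 2 * y2) (B * C ^ 3 * y3) (B * C ^ 4 * y4) =
     B ^ 3 * C ^ 6 * ode_poly c y1 y2 y3 y4"
  unfolding ode_poly_def by algebra

lemma locally_affine_copy_solution:
  assumes chain: "derivative_chain_on UNIV 4 S"
    and ode: "\<And>\<sigma>. ode_poly c (S 1 \<sigma>) (S 2 \<sigma>) (S 3 \<sigma>) (S 4 \<sigma>) = 0"
    and near: "\<And>t. \<exists>Q A B C E. open Q \<and> t \<in> Q \<and> (\<forall>x\<in>Q. y x = A + B * S 0 (C * x + E))"
  shows "C_k_on_R 4 y"
    and "ode_poly c ((deriv ^^ 1) y t) ((deriv ^^ 2) y t) ((deriv ^^ 3) y t) ((deriv ^^ 4) y t) = 0"
proof -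
  have rep: "\<exists>Q h. open Q \<and> t \<in> Q \<and> derivative_chain_on UNIV 4 h \<and> (\<forall>x\<in>Q. y x = h 0 x) \<and>
      (\<exists>B C \<sigma>. \<forall>k\<in>{1..4}. h k t = B * C ^ k * S k \<sigma>)" for t
  proof -
    obtain Q A B C E where Q: "open Q" "t \<in> Q" "\<forall>x\<in>Q. y x = A + B * S 0 (C * x + E)"
      using near[of t] by blast
    define h where "h = (\<lambda>k x. (if k = 0 then A else 0) + B * C ^ k * S k (C * x + E))"
    have "\<forall>x\<in>Q. y x = h 0 x"
      using Q by (simp add: h_def)
    moreover have "derivative_chain_on UNIV 4 h"
      unfolding h_def by (rule derivative_chain_affine[OF chain])
    moreover have "\<forall>k\<in>{1..4}. h k t = B * C ^ k * S k (C * t + E)"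
      by (simp add: h_def)
    ultimately show ?thesis
      using Q(1,2) by blast
  qed
  show "C_k_on_R 4 y"
  proof (rule C_k_on_R_local)
    fix t
    obtain Q h where "open Q" "t \<in> Q" "derivative_chain_on UNIV 4 h" "\<forall>x\<in>Q. y x = h 0 x"
      using rep[of t] by blast
    then show "\<exists>Q h. open Q \<and> t \<in> Q \<and> C_k_on_R 4 h \<and> (\<forall>x\<in>Q. y x = h x)"
      using C_k_on_R_derivative_chain by blast
  qed
  obtain Q h B C \<sigma> where Q: "open Q" "t \<in> Q" "\<forall>x\<in>Q. y x = h 0 x"
    and chain_h: "derivative_chain_on UNIV 4 h"
    and h: "\<forall>k\<in>{1..4}. h k t = B * C ^ k * S k \<sigma>"
    using rep[of t] by blast
  have derivs: "(deriv ^^ k) y t = B * C ^ k * S k \<sigma>" if "k \<in> {1..4}" for k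
  proof -
    have "(deriv ^^ k) y t = (deriv ^^ k) (h 0) t"
      using Q by (intro funpow_deriv_eq_on_open) auto
    also have "\<dots> = h k t"
      using derivative_chain_funpow_deriv[OF chain_h] that by simp
    finally show ?thesis using h that by simp
  qed
  show "ode_poly c ((deriv ^^ 1) y t) ((deriv ^^ 2) y t) ((deriv ^^ 3) y t) ((deriv ^^ 4) y t) = 0"
    using ode_poly_scale[of c B C] ode[of \<sigma>] derivs[of 1] derivs[of 2] derivs[of 3] derivs[of 4]
    by simp
qed

definition pos_powr :: "real \<Rightarrow> real \<Rightarrow> real" where
  "pos_powr m x = max x 0 powr m"

lemma pos_powr_nonneg: "0 \<le> pos_powr m x"
  by (simp add: pos_powr_def)

lemma pos_powr_nonpos: "x \<le> 0 \<Longrightarrow> pos_powr m x = 0"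
  by (simp add: pos_powr_def)

lemma pos_powr_pos: "0 < x \<Longrightarrow> pos_powr m x = x powr m"
  by (simp add: pos_powr_def)

lemma pos_powr_mult_power: "pos_powr m x * x ^ k = pos_powr (m + real k) x"
  by (cases "0 < x") (simp_all add: pos_powr_pos pos_powr_nonpos powr_add powr_realpow)

lemma continuous_on_pos_powr: "0 < m \<Longrightarrow> continuous_on S (pos_powr m)"
  unfolding pos_powr_def[abs_def] by (intro continuous_on_powr') (auto intro!: continuous_intros)

lemma has_real_derivative_pos_powr:
  assumes "1 < m"
  shows "(pos_powr m has_real_derivative m * pos_powr (m - 1) x) (at x)"
proof -
  consider "0 < x" | "x < 0" | "x = 0" by linarith
  then show ?thesis
  proof cases
    case 1
    have "((\<lambda>z. z powr m) has_real_derivative m * x powr (m - 1)) (at x)"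
      using 1 by (rule has_real_derivative_powr)
    moreover have "eventually (\<lambda>z. z \<in> {0<..}) (nhds x)"
      using 1 by (intro eventually_nhds_in_open) auto
    then have "eventually (\<lambda>z. pos_powr m z = z powr m) (nhds x)"
      by eventually_elim (simp add: pos_powr_pos)
    ultimately show ?thesis
      using 1 by (subst DERIV_cong_ev[OF refl _ refl]) (auto simp: pos_powr_pos)
  next
    case 2
    have "eventually (\<lambda>z. z \<in> {..<0}) (nhds x)"
      using 2 by (intro eventually_nhds_in_open) auto
    then have "eventually (\<lambda>z. pos_powr m z = 0) (nhds x)"
      by eventually_elim (simp add: pos_powr_nonpos)
    then show ?thesis
      using 2 by (subst DERIV_cong_ev[OF refl _ refl]) (auto simp: pos_powr_nonpos)
  next
    case 3
    have "(pos_powr m y - pos_powr m 0) / (y - 0) = pos_powr (m - 1) y" for y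
      using pos_powr_mult_power[of "m - 1" y 1] by (cases "y = 0") (auto simp: pos_powr_nonpos divide_eq_eq)
    moreover have "isCont (pos_powr (m - 1)) 0"
      using continuous_on_pos_powr[of "m - 1" UNIV] assms by (simp add: continuous_on_eq_continuous_at)
    then have "(pos_powr (m - 1) \<longlongrightarrow> 0) (at 0)"
      by (simp add: isCont_def pos_powr_nonpos)
    ultimately show ?thesis
      using 3 by (simp add: has_field_derivative_iff pos_powr_nonpos)
  qed
qed

lemma has_real_derivative_pos_powr_comp [derivative_intros]:
  "1 < m \<Longrightarrow> (g has_real_derivative D) (at x) \<Longrightarrow>
    ((\<lambda>x. pos_powr m (g x)) has_real_derivative m * pos_powr (m - 1) (g x) * D) (at x)"
  using DERIV_chain2[OF has_real_derivative_pos_powr] by blast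

(* The derivatives of order 0 to 3 of g^n (read as 0 where g <= 0) at a point where g = x and
   g' = v, for a function g with g'' = -2 g^3. *)
definition power_derivs :: "real \<Rightarrow> real \<Rightarrow> real \<Rightarrow> nat \<Rightarrow> real" where
  "power_derivs n x v k =
    [pos_powr n x,
     n * pos_powr (n - 1) x * v,
     n * (n - 1) * pos_powr (n - 2) x * v\<^sup>2 - 2 * n * pos_powr (n + 2) x,
     n * (n - 1) * (n - 2) * pos_powr (n - 3) x * v ^ 3 - 6 * n\<^sup>2 * pos_powr (n + 1) x * v] ! k"

lemma power_derivs_nonpos: "x \<le> 0 \<Longrightarrow> k \<le> 3 \<Longrightarrow> power_derivs n x v k = 0"
  by (auto simp: power_derivs_def pos_powr_nonpos le_Suc_eq numeral_3_eq_3)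

lemma power_derivs_ode:
  assumes "n \<noteq> 0"
  shows "ode_poly (1 - 1 / n\<^sup>2) (power_derivs n x v 0) (power_derivs n x v 1)
           (power_derivs n x v 2) (power_derivs n x v 3) = 0"
proof (cases "0 < x")
  case True
  define P where "P = x powr (n - 3)"
  have shift: "pos_powr (n - 3 + real k) x = P * x ^ k" for k
    using True by (simp add: P_def pos_powr_pos powr_add powr_realpow)
  have "pos_powr (n - 3) x = P" "pos_powr (n - 2) x = P * x" "pos_powr (n - 1) x = P * x\<^sup>2"
    "pos_powr n x = P * x ^ 3" "pos_powr (n + 1) x = P * x ^ 4" "pos_powr (n + 2) x = P * x ^ 5"
    using shift[of 0] shift[of 1] shift[of 2] shift[of 3] shift[of 4] shift[of 5]
    by (simp_all add: algebra_simps)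
  then have "power_derivs n x v 0 = P * x ^ 3"
    "power_derivs n x v 1 = n * P * x\<^sup>2 * v"
    "power_derivs n x v 2 = n * (n - 1) * P * x * v\<^sup>2 - 2 * n * P * x ^ 5"
    "power_derivs n x v 3 = n * (n - 1) * (n - 2) * P * v ^ 3 - 6 * n\<^sup>2 * P * x ^ 4 * v"
    by (simp_all add: power_derivs_def)
  then show ?thesis
    unfolding ode_poly_def using assms by (simp add: field_simps) algebra
qed (simp add: power_derivs_nonpos ode_poly_def)

lemma derivative_chain_power_derivs:
  assumes "3 < n" "open W"
    and g: "\<And>t. t \<in> W \<Longrightarrow> (g has_real_derivative G t) (at t)"
    and G: "\<And>t. t \<in> W \<Longrightarrow> (G has_real_derivative -2 * g t ^ 3) (at t)"
  shows "derivative_chain_on W 3 (\<lambda>k t. power_derivs n (g t) (G t) k)"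
  unfolding derivative_chain_on_def
proof (intro conjI allI impI ballI)
  fix k :: nat and t assume "k < 3" "t \<in> W"
  have shift: "pos_powr (n - 1) (g t) * g t ^ 3 = pos_powr (n + 2) (g t)"
    "pos_powr (n - 2) (g t) * g t ^ 3 = pos_powr (n + 1) (g t)"
    using pos_powr_mult_power[of "n - 1" "g t" 3] pos_powr_mult_power[of "n - 2" "g t" 3]
    by (simp_all add: add.commute)
  from \<open>k < 3\<close> consider "k = 0" | "k = 1" | "k = 2" by linarith
  then show "((\<lambda>t. power_derivs n (g t) (G t) k) has_real_derivative
      power_derivs n (g t) (G t) (Suc k)) (at t)"
  proof cases
    case 1
    then show ?thesis
      using assms \<open>t \<in> W\<close> by (auto simp: power_derivs_def intro!: derivative_eq_intros)
  next
    case 2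
    then show ?thesis
      using assms \<open>t \<in> W\<close> shift
      by (auto simp: power_derivs_def algebra_simps power2_eq_square power3_eq_cube intro!: derivative_eq_intros)
  next
    case 3
    then show ?thesis
      using assms \<open>t \<in> W\<close> shift
      by (auto simp: power_derivs_def algebra_simps power2_eq_square power3_eq_cube intro!: derivative_eq_intros)
  qed
next
  have "continuous_on W g" "continuous_on W G"
    using g G by (auto intro!: continuous_at_imp_continuous_on DERIV_isCont)
  then show "continuous_on W (\<lambda>t. power_derivs n (g t) (G t) 3)"
    using \<open>3 < n\<close> unfolding power_derivs_def
    by (auto intro!: continuous_intros continuous_on_compose2[OF continuous_on_pos_powr])
qed

section \<open>A lemniscatic sine\<close>

(* The oscillator g'' = -2 g^3 is solved by g = sin o phase with phase' = sqrt (1 + sin phase ^ 2),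
   since then g'^2 = 1 - g^4; the phase is obtained by inverting its time function. *)
definition phase_time :: "real \<Rightarrow> real" where
  "phase_time x = integral {-3..x} (\<lambda>s. 1 / sqrt (1 + (sin s)\<^sup>2))"

definition phase :: "real \<Rightarrow> real" where
  "phase = inv_into {-2..5} phase_time"

lemma phase_time_has_real_derivative:
  assumes "-3 < x"
  shows "(phase_time has_real_derivative 1 / sqrt (1 + (sin x)\<^sup>2)) (at x)"
proof -
  have "continuous_on {-3..x + 1} (\<lambda>s. 1 / sqrt (1 + (sin s)\<^sup>2))"
    by (intro continuous_intros) (auto simp: add_nonneg_eq_0_iff)
  then have "(phase_time has_real_derivative 1 / sqrt (1 + (sin x)\<^sup>2)) (at x within {-3..x + 1})"
    unfolding phase_time_def[abs_def] using assms by (intro integral_has_real_derivative) auto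
  then show ?thesis
    using assms by (simp add: at_within_Icc_at)
qed

lemma strict_mono_on_phase_time: "strict_mono_on {-3<..} phase_time"
proof (rule strict_mono_onI)
  fix a b :: real assume "a \<in> {-3<..}" "b \<in> {-3<..}" "a < b"
  then have deriv: "(phase_time has_real_derivative 1 / sqrt (1 + (sin x)\<^sup>2)) (at x)"
    if "a \<le> x" for x
    using that by (intro phase_time_has_real_derivative) auto
  show "phase_time a < phase_time b"
  proof (rule DERIV_pos_imp_increasing_open[OF \<open>a < b\<close>])
    fix x assume "a < x" "x < b"
    then show "\<exists>y. (phase_time has_real_derivative y) (at x) \<and> 0 < y"
      using deriv[of x] by (auto simp: add_pos_nonneg)
  next
    show "continuous_on {a..b} phase_time"
      using deriv by (intro continuous_at_imp_continuous_on ballI DERIV_isCont) auto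
  qed
qed

lemma phase_phase_time: "x \<in> {-2..5} \<Longrightarrow> phase (phase_time x) = x"
  using strict_mono_on_phase_time unfolding phase_def
  by (intro inv_into_f_f strict_mono_on_imp_inj_on[THEN inj_on_subset]) auto

lemma phase_time_phase:
  assumes "t \<in> {phase_time (-2)..phase_time 5}"
  shows "phase_time (phase t) = t" "phase t \<in> {-2..5}"
proof -
  have "continuous_on {-2..5} phase_time"
    using phase_time_has_real_derivative by (intro continuous_at_imp_continuous_on ballI DERIV_isCont) force
  then obtain x where "x \<in> {-2..5}" "phase_time x = t"
    using IVT'[of phase_time "-2" t 5] assms by auto
  then show "phase_time (phase t) = t" "phase t \<in> {-2..5}"
    using phase_phase_time by auto
qed

lemma phase_greaterThanLessThan:
  assumes t: "t \<in> {phase_time (-2)<..<phase_time 5}"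
  shows "phase t \<in> {-2<..<5}"
proof -
  have "phase_time (phase t) = t" "phase t \<in> {-2..5}"
    using phase_time_phase[of t] t by auto
  then show ?thesis
    using t by (auto simp: order_le_less)
qed

lemma phase_has_real_derivative:
  assumes t: "t \<in> {phase_time (-2)<..<phase_time 5}"
  shows "(phase has_real_derivative sqrt (1 + (sin (phase t))\<^sup>2)) (at t)"
proof -
  have inv: "phase_time (phase t) = t"
    using phase_time_phase[of t] t by auto
  have range: "-2 < phase t" "phase t < 5"
    using phase_greaterThanLessThan[OF t] by auto
  have cont: "isCont phase_time z" if "z \<in> {-2..5}" for z
    using that by (intro DERIV_isCont[OF phase_time_has_real_derivative]) auto
  have "isCont phase (phase_time (phase t))"
    by (rule isCont_inverse_function2[of "-2" _ 5]) (use range cont phase_phase_time in auto)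
  then have "isCont phase t"
    using inv by simp
  moreover have "(phase_time has_real_derivative 1 / sqrt (1 + (sin (phase t))\<^sup>2)) (at (phase t))"
    using range by (intro phase_time_has_real_derivative) simp
  moreover have "phase_time (phase y) = y" if "y \<in> {phase_time (-2)<..<phase_time 5}" for y
    using that phase_time_phase[of y] by simp
  ultimately have "(phase has_real_derivative inverse (1 / sqrt (1 + (sin (phase t))\<^sup>2))) (at t)"
    using t by (intro DERIV_inverse_function[where a = "phase_time (-2)" and b = "phase_time 5"])
      (auto simp: add_nonneg_eq_0_iff)
  then show ?thesis
    by simp
qed

definition lemn :: "real \<Rightarrow> real" where
  "lemn t = sin (phase t)"

definition lemn_deriv :: "real \<Rightarrow> real" where
  "lemn_deriv t = cos (phase t) * sqrt (1 + (sin (phase t))\<^sup>2)"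

lemma has_real_derivative_lemn:
  "t \<in> {phase_time (-2)<..<phase_time 5} \<Longrightarrow> (lemn has_real_derivative lemn_deriv t) (at t)"
  unfolding lemn_def[abs_def] lemn_deriv_def
  by (auto intro!: derivative_eq_intros phase_has_real_derivative)

lemma has_real_derivative_lemn_deriv:
  assumes "t \<in> {phase_time (-2)<..<phase_time 5}"
  shows "(lemn_deriv has_real_derivative -2 * lemn t ^ 3) (at t)"
proof -
  define s c q where "s = sin (phase t)" and "c = cos (phase t)" and "q = sqrt (1 + s\<^sup>2)"
  have q: "q\<^sup>2 = 1 + s\<^sup>2" "0 < q"
    by (simp_all add: q_def add_pos_nonneg)
  have "(lemn_deriv has_real_derivative - s * q * q + c * (2 * s * c * q / (2 * q))) (at t)"
    using assms q(2) unfolding lemn_deriv_def[abs_def] s_def c_def q_def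
    by (auto intro!: derivative_eq_intros phase_has_real_derivative)
  moreover have "c\<^sup>2 = 1 - s\<^sup>2"
    by (simp add: c_def s_def cos_squared_eq)
  then have "- s * q * q + c * (2 * s * c * q / (2 * q)) = -2 * lemn t ^ 3"
    using q by (simp add: lemn_def s_def[symmetric] field_simps power2_eq_square power3_eq_cube) algebra
  ultimately show ?thesis
    by simp
qed

lemma lemn_pos_iff:
  assumes t: "t \<in> {phase_time (-2)<..<phase_time 5}"
  shows "0 < lemn t \<longleftrightarrow> t \<in> {phase_time 0<..<phase_time pi}"
proof -
  have range: "-2 < phase t" "phase t < 5" and inv: "phase_time (phase t) = t"
    using phase_greaterThanLessThan[OF t] phase_time_phase[of t] t by auto
  have mono: "phase_time x < phase_time y \<longleftrightarrow> x < y" if "-3 < x" "-3 < y" for x y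
    using strict_mono_on_less[OF strict_mono_on_phase_time] that by simp
  have "t \<in> {phase_time 0<..<phase_time pi} \<longleftrightarrow> 0 < phase t \<and> phase t < pi"
    using mono[of 0 "phase t"] mono[of "phase t" pi] range pi_gt3 inv by auto
  moreover have "sin (phase t) \<le> 0" if "phase t \<le> 0 \<or> pi \<le> phase t"
    using that range pi_gt3 pi_less_4 sin_ge_zero[of "- phase t"] sin_le_zero[of "phase t"] by auto
  then have "0 < sin (phase t) \<longleftrightarrow> 0 < phase t \<and> phase t < pi"
    using sin_gt_zero[of "phase t"] by force
  ultimately show ?thesis
    by (simp add: lemn_def)
qed

lemma phase_time_0_pi:
  "phase_time 0 < phase_time pi" "{phase_time 0..phase_time pi} \<subseteq> {phase_time (-2)<..<phase_time 5}"
proof -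
  have mono: "phase_time x < phase_time y" if "-3 < x" "x < y" for x y
    using strict_mono_on_phase_time that by (simp add: strict_mono_on_def)
  show "phase_time 0 < phase_time pi" "{phase_time 0..phase_time pi} \<subseteq> {phase_time (-2)<..<phase_time 5}"
    using mono[of 0 pi] mono[of "-2" 0] mono[of pi 5] pi_gt3 pi_less_4 by auto
qed

section \<open>A smooth step solving the equation\<close>

lemma exists_bump:
  assumes "3 < n"
  obtains a b :: real and U :: "nat \<Rightarrow> real \<Rightarrow> real" where
    "a < b" "derivative_chain_on UNIV 3 U"
    "\<And>t. ode_poly (1 - 1 / n\<^sup>2) (U 0 t) (U 1 t) (U 2 t) (U 3 t) = 0"
    "\<And>t. t \<in> {a<..<b} \<Longrightarrow> 0 < U 0 t"
    "\<And>t. t \<notin> {a<..<b} \<Longrightarrow> U 0 t = 0"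
proof -
  define W a b where "W = {phase_time (-2)<..<phase_time 5}" and "a = phase_time 0" and "b = phase_time pi"
  have ab: "a < b" "{a..b} \<subseteq> W" and sign: "\<And>t. t \<in> W \<Longrightarrow> 0 < lemn t \<longleftrightarrow> t \<in> {a<..<b}"
    using phase_time_0_pi lemn_pos_iff by (simp_all add: W_def a_def b_def)
  define U where "U = (\<lambda>k t. if t \<in> W then power_derivs n (lemn t) (lemn_deriv t) k else 0)"
  have "derivative_chain_on UNIV 3 U"
    unfolding U_def
  proof (rule derivative_chain_extend_by_zero)
    show "derivative_chain_on W 3 (\<lambda>k t. power_derivs n (lemn t) (lemn_deriv t) k)"
      using assms has_real_derivative_lemn has_real_derivative_lemn_deriv
      by (intro derivative_chain_power_derivs) (auto simp: W_def)
    show "power_derivs n (lemn t) (lemn_deriv t) k = 0" if "k \<le> 3" "t \<in> W - {a..b}" for k t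
      using that sign[of t] by (intro power_derivs_nonpos) auto
  qed (use ab in \<open>auto simp: W_def\<close>)
  moreover have "ode_poly (1 - 1 / n\<^sup>2) (U 0 t) (U 1 t) (U 2 t) (U 3 t) = 0" for t
    using power_derivs_ode[of n] assms by (simp add: U_def ode_poly_def)
  moreover have "0 < U 0 t" if "t \<in> {a<..<b}" for t
  proof -
    have "t \<in> W"
      using that ab(2) by (meson greaterThanLessThan_subseteq_atLeastAtMost_iff order_refl subsetD)
    then show ?thesis
      using sign[of t] that by (simp add: U_def power_derivs_def pos_powr_pos)
  qed
  moreover have "U 0 t = 0" if "t \<notin> {a<..<b}" for t
    using that sign[of t] by (auto simp: U_def power_derivs_def not_less intro!: pos_powr_nonpos)
  ultimately show ?thesis
    using that ab(1) by blast
qed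

lemma has_real_derivative_integral_vanishing_below:
  fixes f :: "real \<Rightarrow> real"
  assumes "continuous_on UNIV f" "\<And>t. t \<le> a \<Longrightarrow> f t = 0" "c < a"
  shows "((\<lambda>t. integral {c..t} f) has_real_derivative f x) (at x)"
proof (cases "c < x")
  case True
  have "((\<lambda>t. integral {c..t} f) has_real_derivative f x) (at x within {c..x + 1})"
    using True assms(1) by (intro integral_has_real_derivative) (auto intro: continuous_on_subset)
  then show ?thesis
    using True by (simp add: at_within_Icc_at)
next
  case False
  have "eventually (\<lambda>t. t \<in> {..<a}) (nhds x)"
    using False assms(3) by (intro eventually_nhds_in_open) auto
  then have ev: "eventually (\<lambda>t. integral {c..t} f = 0) (nhds x)"
  proof eventually_elim
    case (elim t)
    then have "integral {c..t} f = integral {c..t} (\<lambda>_. 0)"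
      using assms(2) by (intro integral_cong) simp
    then show ?case
      by simp
  qed
  have "((\<lambda>t. integral {c..t} f) has_real_derivative 0) (at x)"
    using DERIV_cong_ev[OF refl ev refl] DERIV_const by blast
  moreover have "f x = 0"
    using False assms(2,3) by simp
  ultimately show ?thesis
    by simp
qed

lemma primitive_of_bump:
  fixes u :: "real \<Rightarrow> real"
  assumes cont: "continuous_on UNIV u" and "a < b"
    and pos: "\<And>t. t \<in> {a<..<b} \<Longrightarrow> 0 < u t" and zero: "\<And>t. t \<notin> {a<..<b} \<Longrightarrow> u t = 0"
  obtains V where "\<And>t. (V has_real_derivative u t) (at t)"
    and "\<And>t. t \<le> a \<Longrightarrow> V t = 0" and "\<And>t. b \<le> t \<Longrightarrow> V t = V b"
    and "\<And>t. 0 \<le> V t" and "\<And>t. V t \<le> V b" and "0 < V b"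
proof -
  define V where "V t = integral {a - 1..t} u" for t
  have V': "(V has_real_derivative u t) (at t)" for t
    unfolding V_def[abs_def] using cont zero
    by (intro has_real_derivative_integral_vanishing_below[where a = a]) auto
  have nonneg: "0 \<le> u t" for t
    using pos[of t] zero[of t] by force
  have mono: "V s \<le> V t" if "s \<le> t" for s t
    by (rule DERIV_nonneg_imp_nondecreasing[OF that]) (metis V' nonneg)
  have below: "V t = 0" if "t \<le> a" for t
  proof -
    have "V t = integral {a - 1..t} (\<lambda>_. 0)"
      unfolding V_def using that zero by (intro integral_cong) auto
    then show ?thesis
      by simp
  qed
  have above: "V t = V b" if "b \<le> t" for t
  proof -
    have "V t \<le> V b"
      by (rule DERIV_nonpos_imp_nonincreasing[OF that]) (metis V' zero greaterThanLessThan_iff not_le order_refl)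
    then show ?thesis
      using mono[OF that] by simp
  qed
  have "0 \<le> V t" "V t \<le> V b" for t
    using mono[of "min t a" t] mono[of t "max t b"] below[of "min t a"] above[of "max t b"]
    by simp_all
  moreover have "V a < V b"
  proof (rule DERIV_pos_imp_increasing_open[OF \<open>a < b\<close>])
    show "\<And>x. a < x \<Longrightarrow> x < b \<Longrightarrow> \<exists>y. (V has_real_derivative y) (at x) \<and> 0 < y"
      using V' pos by auto
    show "continuous_on {a..b} V"
      using V' by (intro continuous_at_imp_continuous_on ballI DERIV_isCont)
  qed
  then have "0 < V b"
    using below[of a] by simp
  ultimately show ?thesis
    using that V' below above by blast
qed

lemma exists_smooth_step:
  assumes "3 < n"
  obtains S :: "nat \<Rightarrow> real \<Rightarrow> real" where
    "derivative_chain_on UNIV 4 S"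
    "\<And>\<sigma>. ode_poly (1 - 1 / n\<^sup>2) (S 1 \<sigma>) (S 2 \<sigma>) (S 3 \<sigma>) (S 4 \<sigma>) = 0"
    "\<And>\<sigma>. \<sigma> \<le> 1/4 \<Longrightarrow> S 0 \<sigma> = 0" "\<And>\<sigma>. 3/4 \<le> \<sigma> \<Longrightarrow> S 0 \<sigma> = 1"
    "\<And>\<sigma>. 0 \<le> S 0 \<sigma>" "\<And>\<sigma>. S 0 \<sigma> \<le> 1"
proof -
  obtain a b U where ab: "a < b" and chain: "derivative_chain_on UNIV 3 U"
    and ode: "\<And>t. ode_poly (1 - 1 / n\<^sup>2) (U 0 t) (U 1 t) (U 2 t) (U 3 t) = 0"
    and pos: "\<And>t. t \<in> {a<..<b} \<Longrightarrow> 0 < U 0 t"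
    and zero: "\<And>t. t \<notin> {a<..<b} \<Longrightarrow> U 0 t = 0"
    using exists_bump[OF assms] by blast
  have "(U 0 has_real_derivative U 1 t) (at t)" for t
    using chain by (simp add: derivative_chain_on_def)
  then have "continuous_on UNIV (U 0)"
    by (intro continuous_at_imp_continuous_on ballI DERIV_isCont)
  then obtain V where V': "\<And>t. (V has_real_derivative U 0 t) (at t)"
    and flat: "\<And>t. t \<le> a \<Longrightarrow> V t = 0" "\<And>t. b \<le> t \<Longrightarrow> V t = V b"
    and range: "\<And>t. 0 \<le> V t" "\<And>t. V t \<le> V b" and "0 < V b"
    using primitive_of_bump[where u = "U 0", OF _ ab pos zero] by blast
  have "derivative_chain_on UNIV 4 (case_nat V U)"
    using derivative_chain_primitive[OF chain] V' by (simp add: numeral_eq_Suc)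
  define C E where "C = 2 * (b - a)" and "E = a - C / 4"
  have affine: "C * \<sigma> + E = a + (b - a) * (2 * \<sigma> - 1/2)" for \<sigma>
    by (simp add: C_def E_def field_simps)
  define S where "S k \<sigma> = 1 / V b * C ^ k * case_nat V U k (C * \<sigma> + E)" for k \<sigma>
  show ?thesis
  proof (rule that[of S])
    show "derivative_chain_on UNIV 4 S"
      using derivative_chain_affine[OF \<open>derivative_chain_on UNIV 4 (case_nat V U)\<close>, of 0 "1 / V b" C E]
      by (simp add: S_def[abs_def])
    show "ode_poly (1 - 1 / n\<^sup>2) (S 1 \<sigma>) (S 2 \<sigma>) (S 3 \<sigma>) (S 4 \<sigma>) = 0" for \<sigma>
      using ode_poly_scale[of "1 - 1 / n\<^sup>2" "1 / V b" C] ode[of "C * \<sigma> + E"]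
      by (simp add: S_def numeral_eq_Suc)
    show "S 0 \<sigma> = 0" if "\<sigma> \<le> 1/4" for \<sigma>
    proof -
      have "(b - a) * (2 * \<sigma> - 1/2) \<le> 0"
        using that ab by (intro mult_nonneg_nonpos) auto
      then show ?thesis
        using flat(1)[of "C * \<sigma> + E"] by (simp add: S_def affine)
    qed
    show "S 0 \<sigma> = 1" if "3/4 \<le> \<sigma>" for \<sigma>
    proof -
      have "(b - a) * 1 \<le> (b - a) * (2 * \<sigma> - 1/2)"
        using that ab by (intro mult_left_mono) auto
      then show ?thesis
        using flat(2)[of "C * \<sigma> + E"] \<open>0 < V b\<close> by (simp add: S_def affine)
    qed
    show "0 \<le> S 0 \<sigma>" "S 0 \<sigma> \<le> 1" for \<sigma>
      using range \<open>0 < V b\<close> by (simp_all add: S_def)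
  qed
qed

section \<open>Interpolation along a grid\<close>

(* The interval [k, k + 1] is cut into N k cells of equal length; cell_phase N t is the position
   of t within its cell, scaled to [0, 1). *)
definition cell_index :: "(int \<Rightarrow> nat) \<Rightarrow> real \<Rightarrow> int" where
  "cell_index N t = \<lfloor>real (N \<lfloor>t\<rfloor>) * (t - \<lfloor>t\<rfloor>)\<rfloor>"

definition cell_start :: "(int \<Rightarrow> nat) \<Rightarrow> real \<Rightarrow> real" where
  "cell_start N t = \<lfloor>t\<rfloor> + cell_index N t / real (N \<lfloor>t\<rfloor>)"

definition cell_end :: "(int \<Rightarrow> nat) \<Rightarrow> real \<Rightarrow> real" where
  "cell_end N t = cell_start N t + 1 / real (N \<lfloor>t\<rfloor>)"

definition cell_phase :: "(int \<Rightarrow> nat) \<Rightarrow> real \<Rightarrow> real" where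
  "cell_phase N t = real (N \<lfloor>t\<rfloor>) * (t - cell_start N t)"

definition grid_interpolant :: "(int \<Rightarrow> nat) \<Rightarrow> (real \<Rightarrow> real) \<Rightarrow> (real \<Rightarrow> real) \<Rightarrow> real \<Rightarrow> real" where
  "grid_interpolant N \<phi> S t =
     \<phi> (cell_start N t) + (\<phi> (cell_end N t) - \<phi> (cell_start N t)) * S (cell_phase N t)"

lemma cell_bounds:
  assumes "0 < N \<lfloor>t\<rfloor>"
  shows "\<lfloor>t\<rfloor> \<le> cell_start N t" "cell_start N t \<le> t" "t < cell_end N t" "cell_end N t \<le> \<lfloor>t\<rfloor> + 1"
    and "0 \<le> cell_phase N t" "cell_phase N t < 1"
    and "0 \<le> cell_index N t" "cell_index N t < N \<lfloor>t\<rfloor>"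
proof -
  define M where "M = real (N \<lfloor>t\<rfloor>)"
  define j where "j = cell_index N t"
  have M: "0 < M" using assms by (simp add: M_def)
  have t: "\<lfloor>t\<rfloor> \<le> t" "t < \<lfloor>t\<rfloor> + 1"
    by linarith+
  have j: "j \<le> M * (t - \<lfloor>t\<rfloor>)" "M * (t - \<lfloor>t\<rfloor>) < j + 1"
    unfolding j_def cell_index_def M_def by linarith+
  have "0 \<le> M * (t - \<lfloor>t\<rfloor>)"
    using t M by simp
  moreover have "M * (t - \<lfloor>t\<rfloor>) < M * 1"
    using M by (intro mult_strict_left_mono) linarith+
  ultimately have "0 \<le> j" "j < int (N \<lfloor>t\<rfloor>)"
    unfolding j_def cell_index_def M_def by (simp_all add: floor_less_iff)
  then show "0 \<le> cell_index N t" "cell_index N t < N \<lfloor>t\<rfloor>"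
    by (simp_all add: j_def)
  then have "0 \<le> j" "j + 1 \<le> M"
    unfolding M_def j_def by linarith+
  have start: "cell_start N t = \<lfloor>t\<rfloor> + j / M" and phase: "cell_phase N t = M * (t - \<lfloor>t\<rfloor>) - j"
    using M by (simp_all add: cell_start_def cell_phase_def j_def M_def field_simps)
  show "\<lfloor>t\<rfloor> \<le> cell_start N t" "cell_start N t \<le> t" "t < cell_end N t" "cell_end N t \<le> \<lfloor>t\<rfloor> + 1"
    using M j \<open>0 \<le> j\<close> \<open>j + 1 \<le> M\<close>
    by (simp_all add: start cell_end_def M_def[symmetric] field_simps)
  show "0 \<le> cell_phase N t" "cell_phase N t < 1"
    using j by (simp_all add: phase)
qed

lemma cell_eqI:
  fixes k j :: int and x :: real
  assumes j: "0 \<le> j" "j < N k" and x: "k + j / N k \<le> x" "x < k + (j + 1) / N k"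
  shows "cell_start N x = k + j / N k" "cell_end N x = k + (j + 1) / N k"
    and "cell_phase N x = N k * (x - k) - j"
proof -
  define M where "M = real (N k)"
  have M: "0 < M" "j + 1 \<le> M"
    using j by (simp_all add: M_def)
  have "0 \<le> j / M" "(j + 1) / M \<le> 1"
    using j M by simp_all
  then have floor: "\<lfloor>x\<rfloor> = k"
    using x by (simp add: M_def[symmetric] floor_eq_iff)
  have "j \<le> M * (x - k)" "M * (x - k) < j + 1"
    using x M(1) by (simp_all add: M_def[symmetric] field_simps)
  then have "cell_index N x = j"
    by (simp add: cell_index_def floor M_def[symmetric] floor_eq_iff)
  with floor M(1) show "cell_start N x = k + j / N k" "cell_end N x = k + (j + 1) / N k"
    and "cell_phase N x = N k * (x - k) - j"
    by (simp_all add: cell_start_def cell_end_def cell_phase_def M_def[symmetric] field_simps)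
qed

lemma cell_right_of_start:
  fixes k j :: int and c x :: real
  assumes j: "0 \<le> j" "j < N k" and c: "c = k + j / N k" and x: "c \<le> x" "x < c + 1 / (4 * N k)"
  shows "cell_start N x = c" "cell_phase N x < 1/4"
proof -
  define M where "M = real (N k)"
  have M: "0 < M"
    using j by (simp add: M_def)
  have "1 / (4 * M) \<le> 1 / M"
    using M by (simp add: field_simps)
  then have "x < k + (j + 1) / M"
    using x c by (simp add: M_def[symmetric] add_divide_distrib)
  then have "cell_start N x = c" and phase: "cell_phase N x = M * (x - k) - j"
    using cell_eqI[of j N k x] j x c by (simp_all add: M_def)
  moreover have "M * (x - k) - j = M * (x - c)"
    using M by (simp add: c M_def[symmetric] field_simps)
  moreover have "M * (x - c) < 1/4"
    using x M by (simp add: M_def[symmetric] field_simps)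
  ultimately show "cell_start N x = c" "cell_phase N x < 1/4"
    by simp_all
qed

lemma cell_left_of_end:
  fixes k j :: int and c x :: real
  assumes j: "0 \<le> j" "j < N k" and c: "c = k + (j + 1) / N k" and x: "c - 1 / (4 * N k) < x" "x < c"
  shows "cell_end N x = c" "3/4 < cell_phase N x"
proof -
  define M where "M = real (N k)"
  have M: "0 < M"
    using j by (simp add: M_def)
  have "1 / (4 * M) \<le> 1 / M"
    using M by (simp add: field_simps)
  then have "k + j / M \<le> x"
    using x c by (simp add: M_def[symmetric] add_divide_distrib)
  then have "cell_end N x = c" and phase: "cell_phase N x = M * (x - k) - j"
    using cell_eqI[of j N k x] j x c by (simp_all add: M_def)
  moreover have "M * (x - k) - j = 1 - M * (c - x)"
    using M by (simp add: c M_def[symmetric] field_simps)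
  moreover have "M * (c - x) < 1/4"
    using x M by (simp add: M_def[symmetric] field_simps)
  ultimately show "cell_end N x = c" "3/4 < cell_phase N x"
    by simp_all
qed

lemma grid_interpolant_in_cell:
  fixes x :: real
  assumes N: "\<And>k. 0 < N k" and x: "x \<in> {cell_start N t<..<cell_end N t}"
  shows "grid_interpolant N \<phi> S x = \<phi> (cell_start N t) +
    (\<phi> (cell_end N t) - \<phi> (cell_start N t)) * S (N \<lfloor>t\<rfloor> * x + - N \<lfloor>t\<rfloor> * cell_start N t)"
proof -
  define k j M where "k = \<lfloor>t\<rfloor>" and "j = cell_index N t" and "M = real (N k)"
  have "0 \<le> j" "j < N k"
    using cell_bounds[of N t, OF N] by (simp_all add: j_def k_def)
  moreover have start: "cell_start N t = k + j / M" and "cell_end N t = k + (j + 1) / M"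
    using N[of k] by (simp_all add: cell_end_def cell_start_def j_def k_def M_def field_simps)
  ultimately have "cell_start N x = cell_start N t" "cell_end N x = cell_end N t"
    and "cell_phase N x = M * (x - k) - j"
    using cell_eqI[of j N k x] x by (simp_all add: M_def)
  moreover have "M * (x - k) - j = M * x + - M * cell_start N t"
    using N[of k] by (simp add: start M_def field_simps)
  ultimately show ?thesis
    by (simp only: grid_interpolant_def M_def k_def)
qed

lemma grid_interpolant_near_node:
  assumes N: "\<And>k. 0 < N k" and node: "cell_phase N t = 0"
    and S_low: "\<And>\<sigma>. \<sigma> \<le> 1/4 \<Longrightarrow> S \<sigma> = 0" and S_high: "\<And>\<sigma>. 3/4 \<le> \<sigma> \<Longrightarrow> S \<sigma> = 1"
  obtains \<delta> where "0 < \<delta>" "\<And>x. x \<in> {t - \<delta><..<t + \<delta>} \<Longrightarrow> grid_interpolant N \<phi> S x = \<phi> t"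
proof -
  define k j M where "k = \<lfloor>t\<rfloor>" and "j = cell_index N t" and "M = real (N k)"
  have j: "0 \<le> j" "j < N k"
    using cell_bounds[of N t, OF N] by (simp_all add: j_def k_def)
  have M: "0 < M"
    using N by (simp add: M_def)
  have t: "t = k + j / M"
    using node M by (simp add: cell_phase_def cell_start_def k_def j_def M_def)
  \<comment> \<open>for t = k, the points just left of t lie in the last cell of [k - 1, k]\<close>
  define \<delta> where "\<delta> = min (1 / (4 * M)) (1 / (4 * N (k - 1)))"
  have "0 < \<delta>"
    using M N[of "k - 1"] by (simp add: \<delta>_def)
  moreover have "grid_interpolant N \<phi> S x = \<phi> t" if "x \<in> {t - \<delta><..<t + \<delta>}" for x
  proof (cases "t \<le> x")
    case True
    then have "cell_start N x = t" "cell_phase N x < 1/4"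
      using cell_right_of_start[of j N k t x] j that t by (auto simp: M_def \<delta>_def)
    then show ?thesis
      by (simp add: grid_interpolant_def S_low)
  next
    case False
    have "cell_end N x = t \<and> 3/4 < cell_phase N x"
    proof (cases "j = 0")
      case True
      have "0 \<le> int (N (k - 1)) - 1" "int (N (k - 1)) - 1 < N (k - 1)"
        using N[of "k - 1"] by simp_all
      moreover have "t = real_of_int (k - 1) + (real_of_int (int (N (k - 1)) - 1) + 1) / N (k - 1)"
        using N[of "k - 1"] True t by simp
      ultimately show ?thesis
        using cell_left_of_end[of "int (N (k - 1)) - 1" N "k - 1" t x] False that
        by (auto simp: \<delta>_def)
    next
      case False
      then have "0 \<le> j - 1" "j - 1 < N k" "t = k + (real_of_int (j - 1) + 1) / M"
        using j t by simp_all
      then show ?thesis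
        using cell_left_of_end[of "j - 1" N k t x] \<open>\<not> t \<le> x\<close> that
        by (auto simp: \<delta>_def M_def)
    qed
    then show ?thesis
      by (simp add: grid_interpolant_def S_high)
  qed
  ultimately show ?thesis
    using that by blast
qed

lemma grid_interpolant_locally_affine:
  assumes N: "\<And>k. 0 < N k"
    and S_low: "\<And>\<sigma>. \<sigma> \<le> 1/4 \<Longrightarrow> S \<sigma> = 0" and S_high: "\<And>\<sigma>. 3/4 \<le> \<sigma> \<Longrightarrow> S \<sigma> = 1"
  shows "\<exists>Q A B C E. open Q \<and> t \<in> Q \<and> (\<forall>x\<in>Q. grid_interpolant N \<phi> S x = A + B * S (C * x + E))"
proof (cases "cell_phase N t = 0")
  case True
  then obtain \<delta> where "0 < \<delta>" "\<And>x. x \<in> {t - \<delta><..<t + \<delta>} \<Longrightarrow> grid_interpolant N \<phi> S x = \<phi> t"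
    using grid_interpolant_near_node[where N = N and t = t and S = S and \<phi> = \<phi>] N S_low S_high by blast
  then show ?thesis
    by (intro exI[of _ "{t - \<delta><..<t + \<delta>}"] exI[of _ "\<phi> t"] exI[of _ 0]) auto
next
  case False
  then have "t \<in> {cell_start N t<..<cell_end N t}"
    using cell_bounds[of N t, OF N] by (auto simp: cell_phase_def)
  then show ?thesis
    using grid_interpolant_in_cell[where N = N and t = t and \<phi> = \<phi> and S = S, OF N]
    by (intro exI[of _ "{cell_start N t<..<cell_end N t}"] exI[of _ "\<phi> (cell_start N t)"]
        exI[of _ "\<phi> (cell_end N t) - \<phi> (cell_start N t)"] exI[of _ "real (N \<lfloor>t\<rfloor>)"]
        exI[of _ "- real (N \<lfloor>t\<rfloor>) * cell_start N t"]) simp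
qed

lemma grid_interpolant_approx:
  assumes N: "\<And>k. 0 < N k" and S: "\<And>\<sigma>. 0 \<le> S \<sigma>" "\<And>\<sigma>. S \<sigma> \<le> 1"
    and mesh: "\<And>k s t. s \<in> {real_of_int k..real_of_int k + 1} \<Longrightarrow> t \<in> {real_of_int k..real_of_int k + 1} \<Longrightarrow>
      \<bar>s - t\<bar> \<le> 1 / N k \<Longrightarrow> \<bar>\<phi> s - \<phi> t\<bar> < \<epsilon> t"
  shows "\<bar>grid_interpolant N \<phi> S t - \<phi> t\<bar> < \<epsilon> t"
proof -
  define lo hi \<sigma> where "lo = cell_start N t" and "hi = cell_end N t" and "\<sigma> = S (cell_phase N t)"
  have bounds: "\<lfloor>t\<rfloor> \<le> lo" "lo \<le> t" "t < hi" "hi \<le> \<lfloor>t\<rfloor> + 1" "hi - lo = 1 / N \<lfloor>t\<rfloor>"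
    using cell_bounds[of N t, OF N] by (simp_all add: lo_def hi_def cell_end_def)
  have t: "t \<in> {real_of_int \<lfloor>t\<rfloor>..real_of_int \<lfloor>t\<rfloor> + 1}"
    by simp
  have "\<bar>\<phi> lo - \<phi> t\<bar> < \<epsilon> t" "\<bar>\<phi> hi - \<phi> t\<bar> < \<epsilon> t"
    using bounds by (auto intro!: mesh[OF _ t])
  moreover have \<sigma>: "0 \<le> \<sigma>" "\<sigma> \<le> 1"
    using S by (simp_all add: \<sigma>_def)
  ultimately have "(1 - \<sigma>) * \<bar>\<phi> lo - \<phi> t\<bar> + \<sigma> * \<bar>\<phi> hi - \<phi> t\<bar> < \<epsilon> t"
    by (intro convex_bound_lt) auto
  moreover have "grid_interpolant N \<phi> S t - \<phi> t = (1 - \<sigma>) * (\<phi> lo - \<phi> t) + \<sigma> * (\<phi> hi - \<phi> t)"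
    by (simp add: grid_interpolant_def lo_def hi_def \<sigma>_def algebra_simps)
  moreover have "\<bar>(1 - \<sigma>) * (\<phi> lo - \<phi> t) + \<sigma> * (\<phi> hi - \<phi> t)\<bar>
      \<le> (1 - \<sigma>) * \<bar>\<phi> lo - \<phi> t\<bar> + \<sigma> * \<bar>\<phi> hi - \<phi> t\<bar>"
    using \<sigma> abs_triangle_ineq[of "(1 - \<sigma>) * (\<phi> lo - \<phi> t)" "\<sigma> * (\<phi> hi - \<phi> t)"]
    by (simp add: abs_mult)
  ultimately show ?thesis
    by linarith
qed

lemma exists_mesh_size:
  fixes \<phi> \<epsilon> :: "real \<Rightarrow> real"
  assumes "continuous_on K \<phi>" "continuous_on K \<epsilon>" "\<And>t. t \<in> K \<Longrightarrow> 0 < \<epsilon> t" "compact K"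
  shows "\<exists>N::nat. (0::nat) < N \<and> (\<forall>s\<in>K. \<forall>t\<in>K. \<bar>s - t\<bar> \<le> 1 / N \<longrightarrow> \<bar>\<phi> s - \<phi> t\<bar> < \<epsilon> t)"
proof (cases "K = {}")
  case False
  obtain t0 where "t0 \<in> K" and min: "\<And>t. t \<in> K \<Longrightarrow> \<epsilon> t0 \<le> \<epsilon> t"
    using continuous_attains_inf[OF \<open>compact K\<close> False assms(2)] by blast
  then have "0 < \<epsilon> t0"
    using assms(3) by blast
  moreover have "uniformly_continuous_on K \<phi>"
    using assms by (intro compact_uniformly_continuous)
  ultimately obtain d where "0 < d" and d: "\<And>s t. s \<in> K \<Longrightarrow> t \<in> K \<Longrightarrow> dist s t < d \<Longrightarrow> dist (\<phi> s) (\<phi> t) < \<epsilon> t0"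
    unfolding uniformly_continuous_on_def by metis
  obtain N :: nat where "inverse (Suc N) < d"
    using reals_Archimedean[OF \<open>0 < d\<close>] by blast
  then have "\<bar>\<phi> s - \<phi> t\<bar> < \<epsilon> t" if "s \<in> K" "t \<in> K" "\<bar>s - t\<bar> \<le> 1 / Suc N" for s t
    using d[of s t] min[of t] that by (simp add: dist_real_def inverse_eq_divide)
  then show ?thesis
    by (intro exI[of _ "Suc N"]) auto
qed auto

lemma exists_grid_mesh:
  fixes \<phi> \<epsilon> :: "real \<Rightarrow> real"
  assumes "continuous_on UNIV \<phi>" "continuous_on UNIV \<epsilon>" "\<And>t. 0 < \<epsilon> t"
  obtains N :: "int \<Rightarrow> nat" where "\<And>k. 0 < N k"
    and "\<And>k s t. s \<in> {real_of_int k..real_of_int k + 1} \<Longrightarrow> t \<in> {real_of_int k..real_of_int k + 1} \<Longrightarrow>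
      \<bar>s - t\<bar> \<le> 1 / N k \<Longrightarrow> \<bar>\<phi> s - \<phi> t\<bar> < \<epsilon> t"
proof -
  have "\<forall>k::int. \<exists>N::nat. (0::nat) < N \<and> (\<forall>s\<in>{real_of_int k..real_of_int k + 1}. \<forall>t\<in>{real_of_int k..real_of_int k + 1}.
      \<bar>s - t\<bar> \<le> 1 / N \<longrightarrow> \<bar>\<phi> s - \<phi> t\<bar> < \<epsilon> t)"
    using assms by (intro allI exists_mesh_size) (auto intro: continuous_on_subset)
  then show ?thesis
    using that by metis
qed

theorem theorem4:
  fixes n :: real and \<phi> \<epsilon> :: "real \<Rightarrow> real"
  assumes "n > 3"
    and "continuous_on UNIV \<phi>"
    and "continuous_on UNIV \<epsilon>"
    and "\<forall>t. \<epsilon> t > 0"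
  shows "\<exists>y :: real \<Rightarrow> real. C_k_on_R 4 y \<and>
           (\<forall>t. (deriv ^^ 4) y t * ((deriv ^^ 1) y t)^2
                 - 3 * (deriv ^^ 3) y t * (deriv ^^ 2) y t * (deriv ^^ 1) y t
                 + 2 * (1 - 1 / n^2) * ((deriv ^^ 2) y t)^3 = 0) \<and>
           (\<forall>t. \<bar>y t - \<phi> t\<bar> < \<epsilon> t)"
proof -
  obtain S where chain: "derivative_chain_on UNIV 4 S"
    and ode: "\<And>\<sigma>. ode_poly (1 - 1 / n\<^sup>2) (S 1 \<sigma>) (S 2 \<sigma>) (S 3 \<sigma>) (S 4 \<sigma>) = 0"
    and flat: "\<And>\<sigma>. \<sigma> \<le> 1/4 \<Longrightarrow> S 0 \<sigma> = 0" "\<And>\<sigma>. 3/4 \<le> \<sigma> \<Longrightarrow> S 0 \<sigma> = 1"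
    and range: "\<And>\<sigma>. 0 \<le> S 0 \<sigma>" "\<And>\<sigma>. S 0 \<sigma> \<le> 1"
    using exists_smooth_step[OF assms(1)] by blast
  have "\<And>t. 0 < \<epsilon> t"
    using assms(4) by simp
  then obtain N :: "int \<Rightarrow> nat" where N: "\<And>k. 0 < N k"
    and mesh: "\<And>k s t. s \<in> {real_of_int k..real_of_int k + 1} \<Longrightarrow> t \<in> {real_of_int k..real_of_int k + 1} \<Longrightarrow>
      \<bar>s - t\<bar> \<le> 1 / N k \<Longrightarrow> \<bar>\<phi> s - \<phi> t\<bar> < \<epsilon> t"
    using exists_grid_mesh[OF assms(2,3)] by blast
  define y where "y = grid_interpolant N \<phi> (S 0)"
  have near: "\<exists>Q A B C E. open Q \<and> t \<in> Q \<and> (\<forall>x\<in>Q. y x = A + B * S 0 (C * x + E))" for t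
    unfolding y_def using N flat by (rule grid_interpolant_locally_affine)
  have "C_k_on_R 4 y"
    using chain ode near by (rule locally_affine_copy_solution)
  moreover have "ode_poly (1 - 1 / n\<^sup>2) ((deriv ^^ 1) y t) ((deriv ^^ 2) y t) ((deriv ^^ 3) y t)
      ((deriv ^^ 4) y t) = 0" for t
    using chain ode near by (rule locally_affine_copy_solution)
  moreover have "\<bar>y t - \<phi> t\<bar> < \<epsilon> t" for t
    unfolding y_def using N range mesh by (rule grid_interpolant_approx)
  ultimately show ?thesis
    unfolding ode_poly_def by blast
qed

end
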